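(* Let $(X,\varrho)$ and $(Y,d)$ be metric spaces and $f\colon X\to Y$. In addition to all implications valid for topological $X$ (PCP $\Rightarrow$ fragmentable; fragmentable $\Rightarrow$ cliquish; fragmentable $\Rightarrow$ weakly separated; Lebesgue property $\Rightarrow$ generalized Lebesgue property; generalized Lebesgue property $\Rightarrow$ weakly separated and $\Rightarrow$ Borel 1; pointwise discontinuous $\Rightarrow$ cliquish; for $X$ Baire: generalized Lebesgue property $\Rightarrow$ cliquish and cliquish $\Rightarrow$ pointwise discontinuous; for $X$ hereditarily Baire: fragmentable $\Rightarrow$ PCP and generalized Lebesgue property $\Rightarrow$ fragmentable; for $Y$ separable: Borel 1 $\Rightarrow$ Lebesgue property), the following hold: (a) $f$ is weakly separated if and only if $f$ has the LTZ property; (b) if $f$ is weakly separated, then $f$ has the generalized Lebesgue property; (c) if $f$ is fragmentable, then $f$ is Borel 1; (d) if $X$ is hereditarily Baire and $f$ is Borel 1, then $f$ has (PCP); (e) if $X$ is hereditarily Baire and $f$ is weakly separated, then $f$ is fragmentable; (f) if $X$ is separable and $f$ has the generalized Lebesgue property, then $f$ has the Lebesgue property.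
   Context: Let $X$ be a topological space, $(Y,d)$ a metric space and $f\colon X\to Y$. A neighborhood assignment is a family $\{V_x\}_{x\in X}$ of open subsets of $X$ with $x\in V_x$ for every $x$. A family of subsets of $X$ is discrete if every point of $X$ has a neighborhood meeting at most one member of the family; it is $\sigma$-discrete if it is a countable union of discrete families. The function $f$ is called: weakly separated if for every $\varepsilon>0$ there is a neighborhood assignment $\{V_x\}_{x\in X}$ such that for all $x,y\in X$, $(x,y)\in V_y\times V_x$ implies $d(f(x),f(y))<\varepsilon$; fragmentable if for every $\varepsilon>0$ and every nonempty closed $F\subseteq X$ there is an open $U$ with $U\cap F\neq\emptyset$ and $\operatorname{diam} f(U\cap F)<\varepsilon$; cliquish if for every $\varepsilon>0$ and every nonempty open $U\subseteq X$ there is a nonempty open $O\subseteq U$ with $\operatorname{diam} f(O)<\varepsilon$; said to have the Lebesgue property if for every $\varepsilon>0$ there are closed sets $X_n$ ($n\in\mathbb N$) with $X=\bigcup_n X_n$ and $\operatorname{diam} f(X_n)\le\varepsilon$ for all $n$; said to have the generalized Lebesgue property if for every $\varepsilon>0$ there is a $\sigma$-discrete family $\mathcal A_\varepsilon$ of closed subsets of $X$ with $X=\bigcup\mathcal A_\varepsilon$ and $\operatorname{diam} f(A)\le\varepsilon$ for all $A\in\mathcal A_\varepsilon$; said to have (PCP) if for every nonempty closed $F\subseteq X$ the restriction $f|_F$ has a point of continuity; pointwise discontinuous if the set of continuity points of $f$ is dense in $X$; Borel 1 if $f^{-1}(V)$ is an $F_\sigma$ set in $X$ for every open $V\subseteq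 Y$. A space is Baire if every nonempty open subset of it is nonmeager in it; it is hereditarily Baire if every nonempty closed subspace is a Baire space. When $X$ carries a metric $\varrho$, $f$ has the LTZ property if for every $\varepsilon>0$ there is $\delta_\varepsilon\colon X\to(0,\infty)$ such that for all $x,y\in X$, $\varrho(x,y)<\min\{\delta_\varepsilon(x),\delta_\varepsilon(y)\}$ implies $d(f(x),f(y))<\varepsilon$. *)

theory Defs
  imports "HOL-Analysis.Analysis"
begin

text \<open>Diameter of a set in a metric space, valued in the extended reals
  (so that unbounded sets have diameter \<open>\<infinity>\<close>; the empty set has diameter \<open>-\<infinity>\<close>).\<close>
definition diam :: "'b::metric_space set \<Rightarrow> ereal" where
  "diam S = (SUP p\<in>S \<times> S. ereal (dist (fst p) (snd p)))"

definition weakly_separated :: "('a::topological_space \<Rightarrow> 'b::metric_space) \<Rightarrow> bool" where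
  "weakly_separated f \<longleftrightarrow> (\<forall>\<epsilon>>0. \<exists>V::'a \<Rightarrow> 'a set.
      (\<forall>x. open (V x) \<and> x \<in> V x) \<and>
      (\<forall>x y. (x \<in> V y \<and> y \<in> V x) \<longrightarrow> dist (f x) (f y) < \<epsilon>))"

definition fragmentable :: "('a::topological_space \<Rightarrow> 'b::metric_space) \<Rightarrow> bool" where
  "fragmentable f \<longleftrightarrow> (\<forall>\<epsilon>>0. \<forall>F. closed F \<and> F \<noteq> {} \<longrightarrow>
      (\<exists>U. open U \<and> U \<inter> F \<noteq> {} \<and> diam (f ` (U \<inter> F)) < ereal \<epsilon>))"

definition cliquish :: "('a::topological_space \<Rightarrow> 'b::metric_space) \<Rightarrow> bool" where
  "cliquish f \<longleftrightarrow> (\<forall>\<epsilon>>0. \<forall>U. open U \<and> U \<noteq> {} \<longrightarrow>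
      (\<exists>W. open W \<and> W \<noteq> {} \<and> W \<subseteq> U \<and> diam (f ` W) < ereal \<epsilon>))"

definition Lebesgue_property :: "('a::topological_space \<Rightarrow> 'b::metric_space) \<Rightarrow> bool" where
  "Lebesgue_property f \<longleftrightarrow> (\<forall>\<epsilon>>0. \<exists>C::nat \<Rightarrow> 'a set.
      (\<forall>n. closed (C n)) \<and> (\<Union>n. C n) = UNIV \<and> (\<forall>n. diam (f ` C n) \<le> ereal \<epsilon>))"

definition discrete_family :: "'a::topological_space set set \<Rightarrow> bool" where
  "discrete_family \<A> \<longleftrightarrow> (\<forall>x. \<exists>W. open W \<and> x \<in> W \<and>
      (\<forall>A\<in>\<A>. \<forall>B\<in>\<A>. A \<inter> W \<noteq> {} \<and> B \<inter> W \<noteq> {} \<longrightarrow> A = B))"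

definition sigma_discrete_family :: "'a::topological_space set set \<Rightarrow> bool" where
  "sigma_discrete_family \<A> \<longleftrightarrow> (\<exists>\<D>::nat \<Rightarrow> 'a set set.
      (\<forall>n. discrete_family (\<D> n)) \<and> \<A> = (\<Union>n. \<D> n))"

definition generalized_Lebesgue_property :: "('a::topological_space \<Rightarrow> 'b::metric_space) \<Rightarrow> bool" where
  "generalized_Lebesgue_property f \<longleftrightarrow> (\<forall>\<epsilon>>0. \<exists>\<A>::'a set set.
      sigma_discrete_family \<A> \<and> (\<forall>A\<in>\<A>. closed A) \<and> \<Union>\<A> = UNIV \<and>
      (\<forall>A\<in>\<A>. diam (f ` A) \<le> ereal \<epsilon>))"

definition PCP :: "('a::topological_space \<Rightarrow> 'b::metric_space) \<Rightarrow> bool" where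
  "PCP f \<longleftrightarrow> (\<forall>F. closed F \<and> F \<noteq> {} \<longrightarrow> (\<exists>x\<in>F. (f \<longlongrightarrow> f x) (at x within F)))"

definition pointwise_discontinuous :: "('a::topological_space \<Rightarrow> 'b::metric_space) \<Rightarrow> bool" where
  "pointwise_discontinuous f \<longleftrightarrow> closure {x. (f \<longlongrightarrow> f x) (at x)} = UNIV"

definition Borel1 :: "('a::topological_space \<Rightarrow> 'b::metric_space) \<Rightarrow> bool" where
  "Borel1 f \<longleftrightarrow> (\<forall>V. open V \<longrightarrow> fsigma_in euclidean (f -` V))"

definition LTZ :: "('a::metric_space \<Rightarrow> 'b::metric_space) \<Rightarrow> bool" where
  "LTZ f \<longleftrightarrow> (\<forall>\<epsilon>>0. \<exists>\<delta>::'a \<Rightarrow> real. (\<forall>x. \<delta> x > 0) \<and>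
      (\<forall>x y. dist x y < min (\<delta> x) (\<delta> y) \<longrightarrow> dist (f x) (f y) < \<epsilon>))"

definition nowhere_dense_in :: "'a topology \<Rightarrow> 'a set \<Rightarrow> bool" where
  "nowhere_dense_in T S \<longleftrightarrow> S \<subseteq> topspace T \<and> T interior_of (T closure_of S) = {}"

definition meager_in :: "'a topology \<Rightarrow> 'a set \<Rightarrow> bool" where
  "meager_in T S \<longleftrightarrow> (\<exists>N::nat \<Rightarrow> 'a set. (\<forall>n. nowhere_dense_in T (N n)) \<and> S = (\<Union>n. N n))"

definition Baire_space :: "'a topology \<Rightarrow> bool" where
  "Baire_space T \<longleftrightarrow> (\<forall>U. openin T U \<and> U \<noteq> {} \<longrightarrow> \<not> meager_in T U)"

definition hereditarily_Baire :: "'a topology \<Rightarrow> bool" where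
  "hereditarily_Baire T \<longleftrightarrow> (\<forall>F. closedin T F \<and> F \<noteq> {} \<longrightarrow> Baire_space (subtopology T F))"

end

theory Submission
  imports Defs
begin

text \<open>The gauge \<open>\<delta>\<close> of the LTZ property and the neighbourhoods \<open>V\<^sub>x\<close> of weak separation
  are interchangeable via \<open>V\<^sub>x = ball x (\<delta> x)\<close>. On a level set \<open>{\<delta> > r}\<close> points closer
  than \<open>r\<close> have close images, so cutting it with a \<open>\<sigma>\<close>-discrete refinement of the cover by
  \<open>r/2\<close>-balls (Stone) yields the closed sets of the generalized Lebesgue property. A discrete
  union of closed sets is closed, which gives Borel 1; in a separable space discrete families are
  countable, which gives the Lebesgue property. A fragmentable function is weakly separated via
  the transfinite derivation that strips off pieces of small oscillation. On hereditarily Baire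
  spaces, Baire category applied to closures of level sets gives (e); for (d) it confines a Borel 1
  function on some piece to one member of a disjoint open family of small sets, since otherwise a
  sequence with pairwise distinct labels whose odd and even terms are both dense in its closure
  contradicts Baire category on that closure.\<close>

section \<open>Diameter\<close>

lemma diam_leI:
  assumes "\<And>x y. x \<in> S \<Longrightarrow> y \<in> S \<Longrightarrow> dist x y \<le> e"
  shows "diam S \<le> ereal e"
  unfolding diam_def using assms by (intro SUP_least) auto

lemma dist_le_diam: "x \<in> S \<Longrightarrow> y \<in> S \<Longrightarrow> ereal (dist x y) \<le> diam S"
  unfolding diam_def by (rule SUP_upper2[of "(x, y)"]) auto

lemma dist_less_of_diam_less: "diam S < ereal e \<Longrightarrow> x \<in> S \<Longrightarrow> y \<in> S \<Longrightarrow> dist x y < e"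
  using dist_le_diam[of x S y] by (meson ereal_less_eq(3) le_less_trans not_le)

lemma dist_le_of_diam_le: "diam S \<le> ereal e \<Longrightarrow> x \<in> S \<Longrightarrow> y \<in> S \<Longrightarrow> dist x y \<le> e"
  using dist_le_diam[of x S y] by (meson ereal_less_eq(3) order_trans)

lemma diam_mono: "S \<subseteq> T \<Longrightarrow> diam S \<le> diam T"
  unfolding diam_def by (rule SUP_subset_mono) auto

lemma diam_subset_ball: "S \<subseteq> ball a r \<Longrightarrow> diam S \<le> ereal (2 * r)"
proof (rule diam_leI)
  fix x y assume "S \<subseteq> ball a r" "x \<in> S" "y \<in> S"
  then have "dist a x < r" "dist a y < r"
    by auto
  then show "dist x y \<le> 2 * r"
    using dist_triangle3[of x y a] by linarith
qed

section \<open>Baire category\<close>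

lemma nowhere_dense_in_subtopologyI:
  fixes C V F :: "'a::topological_space set"
  assumes "closed C" "open V"
    and no_piece: "\<And>U. open U \<Longrightarrow> U \<inter> F \<subseteq> C \<inter> V \<Longrightarrow> U \<inter> F = {}"
  shows "nowhere_dense_in (subtopology euclidean F) (C \<inter> V \<inter> F)"
proof -
  let ?N = "C \<inter> V \<inter> F"
  have "T = {}" if T: "openin (subtopology euclidean F) T"
    "T \<subseteq> subtopology euclidean F closure_of ?N" for T
  proof -
    obtain U where U: "open U" "T = U \<inter> F"
      using T(1) by (auto simp: openin_subtopology)
    have "subtopology euclidean F closure_of ?N \<subseteq> closure ?N"
      by (metis closure_of_subtopology_subset euclidean_closure_of)
    then have "T \<subseteq> closure ?N"
      using T(2) by (rule order.trans[rotated])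
    moreover have "closure ?N \<subseteq> C"
      using \<open>closed C\<close> by (intro closure_minimal) auto
    ultimately have "(U \<inter> V) \<inter> F \<subseteq> C \<inter> V"
      using U(2) by blast
    then have "U \<inter> ?N = {}"
      using no_piece[of "U \<inter> V"] U(1) \<open>open V\<close> by blast
    then have "U \<inter> closure ?N = {}"
      using U(1) open_Int_closure_eq_empty by blast
    then show "T = {}"
      using \<open>T \<subseteq> closure ?N\<close> U(2) by blast
  qed
  then have "subtopology euclidean F interior_of (subtopology euclidean F closure_of ?N) = {}"
    unfolding interior_of_eq_empty by blast
  then show ?thesis
    unfolding nowhere_dense_in_def by simp
qed

lemma hereditarily_Baire_countable_closed_cover:
  fixes F V :: "'a::topological_space set"
  assumes hB: "hereditarily_Baire (euclidean :: 'a topology)"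
    and "closed F" "open V" "V \<inter> F \<noteq> {}"
    and "countable \<C>" "\<And>C. C \<in> \<C> \<Longrightarrow> closed C" "V \<inter> F \<subseteq> \<Union>\<C>"
  obtains C U where "C \<in> \<C>" "open U" "U \<inter> F \<noteq> {}" "U \<inter> F \<subseteq> C \<inter> V"
proof (rule ccontr)
  assume "\<not> thesis"
  then have no_piece: "\<forall>C\<in>\<C>. \<forall>U. open U \<and> U \<inter> F \<subseteq> C \<inter> V \<longrightarrow> U \<inter> F = {}"
    using that by blast
  define N where "N n = from_nat_into \<C> n \<inter> V \<inter> F" for n
  have "\<C> \<noteq> {}"
    using \<open>V \<inter> F \<subseteq> \<Union>\<C>\<close> \<open>V \<inter> F \<noteq> {}\<close> by auto
  then have range_\<C>: "range (from_nat_into \<C>) = \<C>"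
    using \<open>countable \<C>\<close> by (simp add: range_from_nat_into)
  have "nowhere_dense_in (subtopology euclidean F) (N n)" for n
    unfolding N_def
  proof (rule nowhere_dense_in_subtopologyI)
    have "from_nat_into \<C> n \<in> \<C>"
      using range_\<C> by blast
    then show "closed (from_nat_into \<C> n)"
      "\<And>U. open U \<Longrightarrow> U \<inter> F \<subseteq> from_nat_into \<C> n \<inter> V \<Longrightarrow> U \<inter> F = {}"
      using assms(6) no_piece by blast+
  qed (rule \<open>open V\<close>)
  moreover have "V \<inter> F = (\<Union>n. N n)"
    unfolding N_def using \<open>V \<inter> F \<subseteq> \<Union>\<C>\<close> range_\<C> by blast
  ultimately have "meager_in (subtopology euclidean F) (V \<inter> F)"
    unfolding meager_in_def by blast
  moreover have "Baire_space (subtopology euclidean F)"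
    using hB \<open>closed F\<close> \<open>V \<inter> F \<noteq> {}\<close> unfolding hereditarily_Baire_def by auto
  moreover have "openin (subtopology euclidean F) (V \<inter> F)"
    using \<open>open V\<close> by (auto simp: openin_subtopology)
  ultimately show False
    using \<open>V \<inter> F \<noteq> {}\<close> unfolding Baire_space_def by blast
qed

lemma hereditarily_Baire_closed_sequence_cover:
  fixes F :: "'a::topological_space set" and C :: "nat \<Rightarrow> 'a set"
  assumes "hereditarily_Baire (euclidean :: 'a topology)"
    and "closed F" "F \<noteq> {}" "\<And>n. closed (C n)" "F \<subseteq> (\<Union>n. C n)"
  obtains n U where "open U" "U \<inter> F \<noteq> {}" "U \<inter> F \<subseteq> C n"
proof -
  obtain C' U where "C' \<in> range C" "open U" "U \<inter> F \<noteq> {}" "U \<inter> F \<subseteq> C' \<inter> UNIV"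
  proof (rule hereditarily_Baire_countable_closed_cover[OF assms(1,2) open_UNIV])
    show "UNIV \<inter> F \<noteq> {}" "UNIV \<inter> F \<subseteq> \<Union>(range C)"
      using assms(3,5) by auto
    show "countable (range C)"
      by (rule countable_image) simp
  qed (use assms(4) in auto)
  then show thesis
    using that by blast
qed

section \<open>Discrete families and Stone's refinement\<close>

lemma ball_cover_sigma_discrete_refinement:
  fixes r :: real
  assumes "r > 0"
  obtains U :: "nat \<Rightarrow> 'a::metric_space \<Rightarrow> 'a set"
  where "\<And>m a. open (U m a)" "\<And>m a. U m a \<subseteq> ball a r" "\<And>y. \<exists>m a. y \<in> U m a"
    "\<And>m a b y z. a \<noteq> b \<Longrightarrow> y \<in> U m a \<Longrightarrow> z \<in> U m b \<Longrightarrow> inverse (real (Suc m)) \<le> dist y z"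
proof -
  obtain R :: "'a rel" where R: "well_order_on UNIV R"
    using well_ordering by metis
  define s where "s = R - Id"
  have "wf s"
    using R unfolding s_def well_order_on_def by blast
  have s_total: "(a, b) \<in> s \<or> (b, a) \<in> s" if "a \<noteq> b" for a b
    using R that unfolding s_def well_order_on_def linear_order_on_def total_on_def by auto
  define \<rho> where "\<rho> m = inverse (real (Suc m))" for m
  have \<rho>_pos: "\<rho> m > 0" for m
    unfolding \<rho>_def by simp
  \<comment> \<open>Stone's construction: with the centres well-ordered, \<open>E m a\<close> consists of the points
    whose first covering ball is \<open>ball a r\<close> and which lie \<open>3 / (m + 1)\<close>-deep inside it.\<close>
  define E where "E m a = {y. (\<forall>b. (b, a) \<in> s \<longrightarrow> y \<notin> ball b r) \<and> ball y (3 * \<rho> m) \<subseteq> ball a r}"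
    for m a
  define U where "U m a = (\<Union>y\<in>E m a. ball y (\<rho> m))" for m a
  have E_separated: "3 * \<rho> m \<le> dist y z" if "(a, b) \<in> s" "y \<in> E m a" "z \<in> E m b" for m a b y z
  proof -
    have "z \<notin> ball a r" "ball y (3 * \<rho> m) \<subseteq> ball a r"
      using that unfolding E_def by auto
    then show ?thesis
      by (meson mem_ball not_less subsetD)
  qed
  show thesis
  proof
    show "open (U m a)" for m a
      unfolding U_def by auto
    show "U m a \<subseteq> ball a r" for m a
    proof -
      have "ball y (\<rho> m) \<subseteq> ball a r" if "y \<in> E m a" for y
        using that \<rho>_pos[of m] subset_ball[of "\<rho> m" "3 * \<rho> m" y] unfolding E_def by auto
      then show ?thesis
        unfolding U_def by blast
    qed
  next
    fix y :: 'a
    have "y \<in> {a. y \<in> ball a r}"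
      using \<open>r > 0\<close> by simp
    then obtain a where a: "y \<in> ball a r" "\<And>b. (b, a) \<in> s \<Longrightarrow> y \<notin> ball b r"
      by (rule wfE_min[OF \<open>wf s\<close>]) auto
    have "(r - dist a y) / 3 > 0"
      using a(1) by simp
    then obtain m where m: "\<rho> m < (r - dist a y) / 3"
      unfolding \<rho>_def by (rule reals_Archimedean[THEN exE])
    have "ball y (3 * \<rho> m) \<subseteq> ball a r"
    proof
      fix z assume "z \<in> ball y (3 * \<rho> m)"
      then show "z \<in> ball a r"
        using m dist_triangle[of a z y] by simp
    qed
    then have "y \<in> E m a"
      using a(2) unfolding E_def by blast
    then have "y \<in> U m a"
      unfolding U_def using \<rho>_pos[of m] by (auto intro!: bexI[of _ y])
    then show "\<exists>m a. y \<in> U m a"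
      by blast
  next
    fix m a b y z
    assume "a \<noteq> b" "y \<in> U m a" "z \<in> U m b"
    then obtain y' z' where "y' \<in> E m a" "dist y' y < \<rho> m" "z' \<in> E m b" "dist z' z < \<rho> m"
      unfolding U_def by auto
    moreover from this have "3 * \<rho> m \<le> dist y' z'"
      using s_total[OF \<open>a \<noteq> b\<close>] E_separated by (metis dist_commute)
    ultimately show "inverse (real (Suc m)) \<le> dist y z"
      unfolding \<rho>_def[symmetric]
      using dist_triangle[of y' z' y] dist_triangle[of y z' z] dist_commute[of z z'] by linarith
  qed
qed

lemma discrete_family_subset:
  assumes "discrete_family \<A>" "\<B> \<subseteq> \<A>"
  shows "discrete_family \<B>"
  using assms unfolding discrete_family_def by (meson subsetD)

lemma discrete_familyE:
  assumes "discrete_family \<A>"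
  obtains W where "open W" "x \<in> W"
    "\<And>A B. A \<in> \<A> \<Longrightarrow> B \<in> \<A> \<Longrightarrow> A \<inter> W \<noteq> {} \<Longrightarrow> B \<inter> W \<noteq> {} \<Longrightarrow> A = B"
proof -
  have "\<exists>W. open W \<and> x \<in> W \<and> (\<forall>A\<in>\<A>. \<forall>B\<in>\<A>. A \<inter> W \<noteq> {} \<and> B \<inter> W \<noteq> {} \<longrightarrow> A = B)"
    using assms unfolding discrete_family_def by (rule spec)
  then obtain W where W: "open W" "x \<in> W" "\<forall>A\<in>\<A>. \<forall>B\<in>\<A>. A \<inter> W \<noteq> {} \<and> B \<inter> W \<noteq> {} \<longrightarrow> A = B"
    by (elim exE conjE)
  show thesis
  proof (rule that)
    show "open W" "x \<in> W"
      using W(1,2) .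
    show "A = B" if "A \<in> \<A>" "B \<in> \<A>" "A \<inter> W \<noteq> {}" "B \<inter> W \<noteq> {}" for A B
      using W(3) that by blast
  qed
qed

lemma closed_Union_discrete_family:
  assumes "discrete_family \<A>" "\<And>A. A \<in> \<A> \<Longrightarrow> closed A"
  shows "closed (\<Union>\<A>)"
  unfolding closed_def
proof (subst open_subopen, intro ballI)
  fix z assume "z \<in> - \<Union>\<A>"
  obtain W where W: "open W" "z \<in> W"
    "\<And>A B. A \<in> \<A> \<Longrightarrow> B \<in> \<A> \<Longrightarrow> A \<inter> W \<noteq> {} \<Longrightarrow> B \<inter> W \<noteq> {} \<Longrightarrow> A = B"
    using assms(1) by (rule discrete_familyE[where x = z]) iprover
  show "\<exists>T. open T \<and> z \<in> T \<and> T \<subseteq> - \<Union>\<A>"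
  proof (cases "\<exists>A\<in>\<A>. A \<inter> W \<noteq> {}")
    case True
    then obtain A where "A \<in> \<A>" "A \<inter> W \<noteq> {}"
      by blast
    \<comment> \<open>\<open>A\<close> is the only member of the family that meets \<open>W\<close>.\<close>
    then have "W - A \<subseteq> - \<Union>\<A>"
      using W(3) by blast
    moreover have "open (W - A)"
      using W(1) \<open>A \<in> \<A>\<close> assms(2) by (simp add: open_Diff)
    moreover have "z \<in> W - A"
      using W(2) \<open>A \<in> \<A>\<close> \<open>z \<in> - \<Union>\<A>\<close> by blast
    ultimately show ?thesis
      by blast
  next
    case False
    then show ?thesis
      using W(1,2) by blast
  qed
qed

lemma sigma_discrete_family_subset:
  fixes \<A> :: "'a::topological_space set set"
  assumes "sigma_discrete_family \<A>" "\<B> \<subseteq> \<A>"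
  shows "sigma_discrete_family \<B>"
proof -
  obtain D :: "nat \<Rightarrow> 'a set set" where D: "\<And>n. discrete_family (D n)" "\<A> = (\<Union>n. D n)"
    using assms(1) unfolding sigma_discrete_family_def by blast
  have "discrete_family (D n \<inter> \<B>)" for n
    using D(1) by (rule discrete_family_subset) blast
  moreover have "\<B> = (\<Union>n. D n \<inter> \<B>)"
    using D(2) assms(2) by blast
  ultimately show ?thesis
    unfolding sigma_discrete_family_def by (intro exI[of _ "\<lambda>n. D n \<inter> \<B>"]) simp
qed

lemma fsigma_Union_sigma_discrete_family:
  fixes \<A> :: "'a::topological_space set set"
  assumes "sigma_discrete_family \<A>" "\<And>A. A \<in> \<A> \<Longrightarrow> closed A"
  shows "fsigma_in euclidean (\<Union>\<A>)"
proof -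
  obtain D :: "nat \<Rightarrow> 'a set set" where D: "\<And>n. discrete_family (D n)" "\<A> = (\<Union>n. D n)"
    using assms(1) unfolding sigma_discrete_family_def by blast
  have "closed (\<Union>(D n))" for n
    using D(1) by (rule closed_Union_discrete_family) (use D(2) assms(2) in blast)
  then have "fsigma_in euclidean (\<Union>(D n))" for n
    unfolding closed_closedin by (rule closed_imp_fsigma_in)
  then have "fsigma_in euclidean (\<Union>n. \<Union>(D n))"
    by (intro fsigma_in_Union[of "range (\<lambda>n. \<Union>(D n))"]) auto
  moreover have "\<Union>\<A> = (\<Union>n. \<Union>(D n))"
    using D(2) by blast
  ultimately show ?thesis
    by simp
qed

lemma sigma_discrete_family_UN:
  fixes \<A> :: "nat \<Rightarrow> 'a::topological_space set set"
  assumes "\<And>n. sigma_discrete_family (\<A> n)"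
  shows "sigma_discrete_family (\<Union>n. \<A> n)"
proof -
  have "\<exists>D :: nat \<Rightarrow> 'a set set. (\<forall>m. discrete_family (D m)) \<and> \<A> n = (\<Union>m. D m)" for n
    using assms[of n] unfolding sigma_discrete_family_def .
  then obtain D :: "nat \<Rightarrow> nat \<Rightarrow> 'a set set"
    where D: "\<And>n m. discrete_family (D n m)" "\<And>n. \<A> n = (\<Union>m. D n m)"
    by metis
  define D' where "D' i = D (fst (prod_decode i)) (snd (prod_decode i))" for i
  have "(\<Union>n. \<A> n) = (\<Union>i. D' i)"
  proof (intro equalityI subsetI)
    fix A assume "A \<in> (\<Union>n. \<A> n)"
    then obtain n m where "A \<in> D n m"
      using D(2) by blast
    moreover have "D n m = D' (prod_encode (n, m))"
      unfolding D'_def by simp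
    ultimately show "A \<in> (\<Union>i. D' i)"
      by blast
  next
    fix A assume "A \<in> (\<Union>i. D' i)"
    then show "A \<in> (\<Union>n. \<A> n)"
      unfolding D'_def using D(2) by blast
  qed
  moreover have "discrete_family (D' i)" for i
    unfolding D'_def by (rule D(1))
  ultimately show ?thesis
    unfolding sigma_discrete_family_def by blast
qed

lemma discrete_family_closures_of_separated:
  fixes S :: "'i \<Rightarrow> 'a::metric_space set"
  assumes "\<delta> > 0" and separated: "\<And>a b y z. a \<noteq> b \<Longrightarrow> y \<in> S a \<Longrightarrow> z \<in> S b \<Longrightarrow> \<delta> \<le> dist y z"
  shows "discrete_family (range (\<lambda>a. closure (S a)))"
  unfolding discrete_family_def
proof
  fix x :: 'a
  let ?W = "ball x (\<delta> / 2)"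
  have "a = b" if "closure (S a) \<inter> ?W \<noteq> {}" "closure (S b) \<inter> ?W \<noteq> {}" for a b
  proof (rule ccontr)
    assume "a \<noteq> b"
    have "S a \<inter> ?W \<noteq> {}" "S b \<inter> ?W \<noteq> {}"
      using that open_Int_closure_eq_empty[OF open_ball, of x "\<delta> / 2"] by (simp_all only: Int_commute) blast+
    then obtain y z where "y \<in> S a \<inter> ?W" "z \<in> S b \<inter> ?W"
      by blast
    then have "dist y z < \<delta>" "\<delta> \<le> dist y z"
      using dist_triangle3[of y z x] separated[OF \<open>a \<noteq> b\<close>] by auto
    then show False
      by simp
  qed
  then show "\<exists>W. open W \<and> x \<in> W \<and> (\<forall>A\<in>range (\<lambda>a. closure (S a)). \<forall>B\<in>range (\<lambda>a. closure (S a)).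
      A \<inter> W \<noteq> {} \<and> B \<inter> W \<noteq> {} \<longrightarrow> A = B)"
    using \<open>\<delta> > 0\<close> by (intro exI[of _ ?W]) auto
qed

lemma countable_discrete_family:
  fixes \<D> :: "'a::metric_space set set"
  assumes "separable_space (euclidean :: 'a topology)" "discrete_family \<D>"
  shows "countable \<D>"
proof -
  obtain C :: "'a set" where "countable C" "closure C = UNIV"
    using assms(1) unfolding separable_space_def by auto
  define isolates where "isolates A c k \<longleftrightarrow> A \<inter> ball c (inverse (real (Suc k))) \<noteq> {} \<and>
      (\<forall>B\<in>\<D>. B \<inter> ball c (inverse (real (Suc k))) \<noteq> {} \<longrightarrow> B = A)" for A c k
  have "\<exists>p \<in> C \<times> UNIV. isolates A (fst p) (snd p)" if "A \<in> \<D>" "A \<noteq> {}" for A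
  proof -
    obtain x where "x \<in> A"
      using \<open>A \<noteq> {}\<close> by blast
    obtain W where W: "open W" "x \<in> W"
      "\<And>A B. A \<in> \<D> \<Longrightarrow> B \<in> \<D> \<Longrightarrow> A \<inter> W \<noteq> {} \<Longrightarrow> B \<inter> W \<noteq> {} \<Longrightarrow> A = B"
      using assms(2) by (rule discrete_familyE[where x = x]) iprover
    obtain e where "e > 0" "ball x e \<subseteq> W"
      using W(1,2) open_contains_ball by blast
    obtain k where k: "inverse (real (Suc k)) < e / 2"
      using reals_Archimedean \<open>e > 0\<close> by (metis half_gt_zero)
    have "x \<in> closure C" "inverse (real (Suc k)) > 0"
      using \<open>closure C = UNIV\<close> by simp_all
    then obtain c where "c \<in> C" "dist c x < inverse (real (Suc k))"
      unfolding closure_approachable by blast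
    moreover have "ball c (inverse (real (Suc k))) \<subseteq> W"
    proof
      fix z assume "z \<in> ball c (inverse (real (Suc k)))"
      then have "dist x z < e"
        using \<open>dist c x < inverse (real (Suc k))\<close> k dist_triangle3[of x z c] by simp
      then show "z \<in> W"
        using \<open>ball x e \<subseteq> W\<close> by auto
    qed
    ultimately have "isolates A c k"
      unfolding isolates_def using \<open>x \<in> A\<close> \<open>x \<in> W\<close> W(3) \<open>A \<in> \<D>\<close> by fastforce
    then show ?thesis
      using \<open>c \<in> C\<close> by force
  qed
  then obtain g where g: "\<And>A. A \<in> \<D> - {{}} \<Longrightarrow> g A \<in> C \<times> UNIV \<and> isolates A (fst (g A)) (snd (g A))"
    by (metis DiffE singletonI)
  have "inj_on g (\<D> - {{}})"
  proof (rule inj_onI)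
    fix A A' assume "A \<in> \<D> - {{}}" "A' \<in> \<D> - {{}}" "g A = g A'"
    then show "A = A'"
      using g[of A] g[of A'] unfolding isolates_def by (metis DiffD1)
  qed
  moreover have "countable (g ` (\<D> - {{}}))"
  proof (rule countable_subset)
    show "g ` (\<D> - {{}}) \<subseteq> C \<times> UNIV"
      using g by blast
    show "countable (C \<times> (UNIV :: nat set))"
      using \<open>countable C\<close> by simp
  qed
  ultimately have "countable (\<D> - {{}})"
    by (rule countable_image_inj_on[rotated])
  then have "countable (insert {} (\<D> - {{}}))"
    by simp
  then show ?thesis
    by (rule countable_subset[rotated]) auto
qed

section \<open>The LTZ property and the Lebesgue properties\<close>

lemma LTZ_imp_weakly_separated:
  fixes f :: "'a::metric_space \<Rightarrow> 'b::metric_space"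
  assumes "LTZ f"
  shows "weakly_separated f"
  unfolding weakly_separated_def
proof (intro allI impI)
  fix \<epsilon> :: real assume "\<epsilon> > 0"
  then obtain \<delta> where \<delta>: "\<forall>x. \<delta> x > 0" "\<forall>x y. dist x y < min (\<delta> x) (\<delta> y) \<longrightarrow> dist (f x) (f y) < \<epsilon>"
    using assms unfolding LTZ_def by blast
  have "dist (f x) (f y) < \<epsilon>" if "x \<in> ball y (\<delta> y)" "y \<in> ball x (\<delta> x)" for x y
    using that \<delta>(2) by (simp add: dist_commute)
  then show "\<exists>V. (\<forall>x. open (V x) \<and> x \<in> V x) \<and> (\<forall>x y. x \<in> V y \<and> y \<in> V x \<longrightarrow> dist (f x) (f y) < \<epsilon>)"
    using \<delta>(1) by (intro exI[of _ "\<lambda>x. ball x (\<delta> x)"]) auto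
qed

lemma weakly_separated_imp_LTZ:
  fixes f :: "'a::metric_space \<Rightarrow> 'b::metric_space"
  assumes "weakly_separated f"
  shows "LTZ f"
  unfolding LTZ_def
proof (intro allI impI)
  fix \<epsilon> :: real assume "\<epsilon> > 0"
  then obtain V :: "'a \<Rightarrow> 'a set" where V: "\<forall>x. open (V x) \<and> x \<in> V x"
    "\<forall>x y. x \<in> V y \<and> y \<in> V x \<longrightarrow> dist (f x) (f y) < \<epsilon>"
    using assms unfolding weakly_separated_def by blast
  have "\<forall>x. \<exists>r>0. ball x r \<subseteq> V x"
    using V(1) open_contains_ball by blast
  then obtain \<delta> where \<delta>: "\<forall>x. \<delta> x > 0 \<and> ball x (\<delta> x) \<subseteq> V x"
    by metis
  have "dist (f x) (f y) < \<epsilon>" if "dist x y < min (\<delta> x) (\<delta> y)" for x y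
  proof -
    have "y \<in> ball x (\<delta> x)" "x \<in> ball y (\<delta> y)"
      using that by (simp_all add: dist_commute)
    then show ?thesis
      using \<delta> V(2) by blast
  qed
  then show "\<exists>\<delta>. (\<forall>x. \<delta> x > 0) \<and> (\<forall>x y. dist x y < min (\<delta> x) (\<delta> y) \<longrightarrow> dist (f x) (f y) < \<epsilon>)"
    using \<delta> by blast
qed

lemma diam_image_closure_le:
  fixes f :: "'a::metric_space \<Rightarrow> 'b::metric_space"
  assumes \<delta>_pos: "\<And>x. \<delta> x > 0"
    and \<delta>: "\<And>x y. dist x y < min (\<delta> x) (\<delta> y) \<Longrightarrow> dist (f x) (f y) < \<epsilon>"
    and large: "\<And>y. y \<in> S \<Longrightarrow> r < \<delta> y"
    and small: "\<And>y y'. y \<in> S \<Longrightarrow> y' \<in> S \<Longrightarrow> dist y y' < r"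
  shows "diam (f ` closure S) \<le> ereal (3 * \<epsilon>)"
proof -
  have near: "\<exists>y\<in>S. dist (f z) (f y) < \<epsilon>" if "z \<in> closure S" for z
  proof -
    obtain y0 where "y0 \<in> S"
      using \<open>z \<in> closure S\<close> by fastforce
    then have "min (\<delta> z) r > 0"
      using \<delta>_pos small[of y0 y0] by simp
    then obtain y where "y \<in> S" "dist y z < min (\<delta> z) r"
      using \<open>z \<in> closure S\<close> unfolding closure_approachable by blast
    moreover from this have "dist z y < min (\<delta> z) (\<delta> y)"
      using large[of y] by (simp add: dist_commute)
    ultimately show ?thesis
      using \<delta> by blast
  qed
  show ?thesis
  proof (rule diam_leI)
    fix u v assume "u \<in> f ` closure S" "v \<in> f ` closure S"
    then obtain z w where "z \<in> closure S" "w \<in> closure S" "u = f z" "v = f w"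
      by blast
    moreover obtain y y' where "y \<in> S" "dist (f z) (f y) < \<epsilon>" "y' \<in> S" "dist (f w) (f y') < \<epsilon>"
      using near \<open>z \<in> closure S\<close> \<open>w \<in> closure S\<close> by blast
    moreover have "dist (f y) (f y') < \<epsilon>"
      using \<delta>[of y y'] large[of y] large[of y'] small[of y y'] \<open>y \<in> S\<close> \<open>y' \<in> S\<close> by simp
    ultimately show "dist u v \<le> 3 * \<epsilon>"
      using dist_triangle[of "f z" "f w" "f y"] dist_triangle[of "f y" "f w" "f y'"]
      by (simp add: dist_commute)
  qed
qed

lemma LTZ_level_set_cover:
  fixes f :: "'a::metric_space \<Rightarrow> 'b::metric_space"
  assumes \<delta>_pos: "\<And>x. \<delta> x > 0"
    and \<delta>: "\<And>x y. dist x y < min (\<delta> x) (\<delta> y) \<Longrightarrow> dist (f x) (f y) < \<epsilon>" and "r > 0"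
  obtains \<A> where "sigma_discrete_family \<A>" "\<And>A. A \<in> \<A> \<Longrightarrow> closed A" "{x. r < \<delta> x} \<subseteq> \<Union>\<A>"
    "\<And>A. A \<in> \<A> \<Longrightarrow> diam (f ` A) \<le> ereal (3 * \<epsilon>)"
proof -
  have "r / 2 > 0"
    using \<open>r > 0\<close> by simp
  then obtain U :: "nat \<Rightarrow> 'a \<Rightarrow> 'a set" where U_ball: "\<And>m a. U m a \<subseteq> ball a (r / 2)"
    and U_cover: "\<And>y. \<exists>m a. y \<in> U m a"
    and U_separated: "\<And>m a b y z. a \<noteq> b \<Longrightarrow> y \<in> U m a \<Longrightarrow> z \<in> U m b \<Longrightarrow> inverse (real (Suc m)) \<le> dist y z"
    by (rule ball_cover_sigma_discrete_refinement) blast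
  define X where "X = {x. r < \<delta> x}"
  define A where "A m a = closure (U m a \<inter> X)" for m a
  show thesis
  proof (rule that[of "\<Union>m. range (A m)"])
    have "discrete_family (range (A m))" for m
      unfolding A_def using U_separated
      by (intro discrete_family_closures_of_separated[of "inverse (real (Suc m))"]) auto
    then show "sigma_discrete_family (\<Union>m. range (A m))"
      unfolding sigma_discrete_family_def by (intro exI[of _ "\<lambda>m. range (A m)"]) simp
  next
    show "closed P" if "P \<in> (\<Union>m. range (A m))" for P
      using that unfolding A_def by auto
  next
    show "{x. r < \<delta> x} \<subseteq> \<Union>(\<Union>m. range (A m))"
    proof
      fix z assume "z \<in> {x. r < \<delta> x}"
      moreover obtain m a where "z \<in> U m a"
        using U_cover by blast
      ultimately have "z \<in> U m a \<inter> X"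
        unfolding X_def by simp
      then have "z \<in> A m a"
        unfolding A_def by (rule closure_subset[THEN subsetD])
      then show "z \<in> \<Union>(\<Union>m. range (A m))"
        by blast
    qed
  next
    fix P assume "P \<in> (\<Union>m. range (A m))"
    then obtain m a where P: "P = A m a"
      by blast
    have U_small: "dist y y' < r" if "y \<in> U m a" "y' \<in> U m a" for y y'
    proof -
      have "dist a y < r / 2" "dist a y' < r / 2"
        using that U_ball[of m a] by auto
      then show ?thesis
        using dist_triangle3[of y y' a] by linarith
    qed
    show "diam (f ` P) \<le> ereal (3 * \<epsilon>)"
      unfolding P A_def using U_small
      by (intro diam_image_closure_le[where \<delta> = \<delta> and r = r, OF \<delta>_pos \<delta>]) (auto simp: X_def)
  qed
qed

lemma LTZ_imp_generalized_Lebesgue_property: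
  fixes f :: "'a::metric_space \<Rightarrow> 'b::metric_space"
  assumes "LTZ f"
  shows "generalized_Lebesgue_property f"
  unfolding generalized_Lebesgue_property_def
proof (intro allI impI)
  fix \<epsilon> :: real assume "\<epsilon> > 0"
  then obtain \<delta> where \<delta>_pos: "\<And>x. \<delta> x > 0"
    and \<delta>: "\<And>x y. dist x y < min (\<delta> x) (\<delta> y) \<Longrightarrow> dist (f x) (f y) < \<epsilon> / 3"
    using assms unfolding LTZ_def by (metis divide_pos_pos zero_less_numeral)
  have "\<exists>\<A>. sigma_discrete_family \<A> \<and> (\<forall>A\<in>\<A>. closed A) \<and> {x. inverse (real (Suc n)) < \<delta> x} \<subseteq> \<Union>\<A> \<and>
      (\<forall>A\<in>\<A>. diam (f ` A) \<le> ereal (3 * (\<epsilon> / 3)))" for n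
    by (rule LTZ_level_set_cover[OF \<delta>_pos \<delta>, where r = "inverse (real (Suc n))"]) auto
  then obtain \<A> :: "nat \<Rightarrow> 'a set set" where \<A>: "\<And>n. sigma_discrete_family (\<A> n)"
    "\<And>n A. A \<in> \<A> n \<Longrightarrow> closed A" "\<And>n. {x. inverse (real (Suc n)) < \<delta> x} \<subseteq> \<Union>(\<A> n)"
    "\<And>n A. A \<in> \<A> n \<Longrightarrow> diam (f ` A) \<le> ereal \<epsilon>"
    by (metis times_divide_eq_right nonzero_mult_div_cancel_left zero_neq_numeral)
  have "\<Union>(\<Union>n. \<A> n) = UNIV"
  proof (intro equalityI subsetI UNIV_I)
    fix z :: 'a
    obtain n where "inverse (real (Suc n)) < \<delta> z"
      using reals_Archimedean[OF \<delta>_pos] by blast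
    then show "z \<in> \<Union>(\<Union>n. \<A> n)"
      using \<A>(3)[of n] by blast
  qed
  then show "\<exists>\<A>. sigma_discrete_family \<A> \<and> (\<forall>A\<in>\<A>. closed A) \<and> \<Union>\<A> = UNIV \<and> (\<forall>A\<in>\<A>. diam (f ` A) \<le> ereal \<epsilon>)"
    using sigma_discrete_family_UN[OF \<A>(1)] \<A>(2,4) by (intro exI[of _ "\<Union>n. \<A> n"] conjI ballI) auto
qed

lemma generalized_Lebesgue_property_imp_Borel1:
  fixes f :: "'a::topological_space \<Rightarrow> 'b::metric_space"
  assumes "generalized_Lebesgue_property f"
  shows "Borel1 f"
  unfolding Borel1_def
proof (intro allI impI)
  fix V :: "'b set" assume "open V"
  have "\<exists>\<A>. sigma_discrete_family \<A> \<and> (\<forall>A\<in>\<A>. closed A) \<and> \<Union>\<A> = UNIV \<and>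
      (\<forall>A\<in>\<A>. diam (f ` A) \<le> ereal (inverse (real (Suc k))))" for k
    using assms unfolding generalized_Lebesgue_property_def by simp
  then obtain \<A> :: "nat \<Rightarrow> 'a set set" where \<A>: "\<And>k. sigma_discrete_family (\<A> k)"
    "\<And>k A. A \<in> \<A> k \<Longrightarrow> closed A" "\<And>k. \<Union>(\<A> k) = UNIV"
    "\<And>k A. A \<in> \<A> k \<Longrightarrow> diam (f ` A) \<le> ereal (inverse (real (Suc k)))"
    by metis
  \<comment> \<open>Every point of \<open>f -` V\<close> lies in a member of some \<open>\<A> k\<close> whose image is too small to leave \<open>V\<close>.\<close>
  have "f -` V = (\<Union>k. \<Union>{A \<in> \<A> k. f ` A \<subseteq> V})"
  proof (intro equalityI subsetI)
    fix z assume "z \<in> f -` V"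
    then obtain r where "r > 0" "ball (f z) r \<subseteq> V"
      using \<open>open V\<close> open_contains_ball by blast
    obtain k where "inverse (real (Suc k)) < r"
      using reals_Archimedean[OF \<open>r > 0\<close>] by blast
    obtain A where "A \<in> \<A> k" "z \<in> A"
      using \<A>(3)[of k] by (metis UNIV_I Union_iff)
    have "f ` A \<subseteq> ball (f z) r"
    proof
      fix u assume "u \<in> f ` A"
      then have "dist (f z) u \<le> inverse (real (Suc k))"
        using dist_le_of_diam_le[OF \<A>(4)[OF \<open>A \<in> \<A> k\<close>]] \<open>z \<in> A\<close> by blast
      then show "u \<in> ball (f z) r"
        using \<open>inverse (real (Suc k)) < r\<close> by simp
    qed
    then have "A \<in> {A \<in> \<A> k. f ` A \<subseteq> V}"
      using \<open>ball (f z) r \<subseteq> V\<close> \<open>A \<in> \<A> k\<close> by auto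
    then show "z \<in> (\<Union>k. \<Union>{A \<in> \<A> k. f ` A \<subseteq> V})"
      using \<open>z \<in> A\<close> by blast
  qed blast
  moreover have "fsigma_in euclidean (\<Union>{A \<in> \<A> k. f ` A \<subseteq> V})" for k
  proof (rule fsigma_Union_sigma_discrete_family)
    show "sigma_discrete_family {A \<in> \<A> k. f ` A \<subseteq> V}"
      using \<A>(1) by (rule sigma_discrete_family_subset) blast
  qed (use \<A>(2) in blast)
  then have "fsigma_in euclidean (\<Union>k. \<Union>{A \<in> \<A> k. f ` A \<subseteq> V})"
    by (intro fsigma_in_Union[of "range (\<lambda>k. \<Union>{A \<in> \<A> k. f ` A \<subseteq> V})"]) auto
  ultimately show "fsigma_in euclidean (f -` V)"
    by simp
qed

lemma generalized_Lebesgue_property_imp_Lebesgue_property: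
  fixes f :: "'a::metric_space \<Rightarrow> 'b::metric_space"
  assumes "separable_space (euclidean :: 'a topology)" "generalized_Lebesgue_property f"
  shows "Lebesgue_property f"
  unfolding Lebesgue_property_def
proof (intro allI impI)
  fix \<epsilon> :: real assume "\<epsilon> > 0"
  with assms(2) obtain \<A> :: "'a set set" where \<A>: "sigma_discrete_family \<A>" "\<forall>A\<in>\<A>. closed A"
    "\<Union>\<A> = UNIV" "\<forall>A\<in>\<A>. diam (f ` A) \<le> ereal \<epsilon>"
    unfolding generalized_Lebesgue_property_def by (elim allE impE exE conjE)
  from \<A>(1) obtain D :: "nat \<Rightarrow> 'a set set" where "\<forall>n. discrete_family (D n)" "\<A> = (\<Union>n. D n)"
    unfolding sigma_discrete_family_def by (elim exE conjE)
  then have "countable \<A>"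
    using countable_discrete_family[OF assms(1)] by (simp add: countable_UN)
  moreover have "\<A> \<noteq> {}"
    using \<A>(3) by auto
  ultimately have "range (from_nat_into \<A>) = \<A>"
    by (simp add: range_from_nat_into)
  then have "(\<Union>n. from_nat_into \<A> n) = UNIV"
    using \<A>(3) by simp
  moreover have "from_nat_into \<A> n \<in> \<A>" for n
    using from_nat_into[OF \<open>\<A> \<noteq> {}\<close>] .
  ultimately show "\<exists>C :: nat \<Rightarrow> 'a set. (\<forall>n. closed (C n)) \<and> (\<Union>n. C n) = UNIV \<and>
      (\<forall>n. diam (f ` C n) \<le> ereal \<epsilon>)"
    using \<A>(2,4) by (intro exI[of _ "from_nat_into \<A>"] conjI allI) simp_all
qed

section \<open>Fragmentability\<close>

inductive_set tower :: "('a set \<Rightarrow> 'a set) \<Rightarrow> 'a set set" for D where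
  tower_step: "F \<in> tower D \<Longrightarrow> D F \<in> tower D"
| tower_Inter: "(\<And>F. F \<in> S \<Longrightarrow> F \<in> tower D) \<Longrightarrow> \<Inter>S \<in> tower D"

text \<open>For deflationary \<open>D\<close> the tower is a chain; the proof is the usual one for
  Zorn's lemma (cf. \<open>TFin\<close> in theory \<open>Zorn\<close>), with the order reversed.\<close>

lemma tower_comparable_with_extreme:
  assumes deflationary: "\<And>F. D F \<subseteq> F"
    and C: "\<forall>G\<in>tower D. C \<subset> G \<longrightarrow> C \<subseteq> D G"
    and "G \<in> tower D"
  shows "C \<subseteq> G \<or> G \<subseteq> D C"
  using \<open>G \<in> tower D\<close>
proof induct
  case (tower_step G)
  then show ?case
    using C deflationary[of G] by blast
next
  case (tower_Inter S)
  then show ?case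
    by blast
qed

lemma tower_extreme:
  assumes deflationary: "\<And>F. D F \<subseteq> F" and "C \<in> tower D"
  shows "\<forall>G\<in>tower D. C \<subset> G \<longrightarrow> C \<subseteq> D G"
  using \<open>C \<in> tower D\<close>
proof induct
  case (tower_step C)
  show ?case
  proof (intro ballI impI)
    fix G assume G: "G \<in> tower D" "D C \<subset> G"
    then have "C \<subseteq> G"
      using tower_comparable_with_extreme[OF deflationary tower_step(2) G(1)] by blast
    then show "D C \<subseteq> D G"
      using tower_step(2) G(1) deflationary[of C] by (cases "C = G") auto
  qed
next
  case (tower_Inter S)
  show ?case
  proof (intro ballI impI)
    fix G assume G: "G \<in> tower D" "\<Inter>S \<subset> G"
    then obtain C where C: "C \<in> S" "\<not> G \<subseteq> C"
      by blast
    then have C_extreme: "\<forall>G\<in>tower D. C \<subset> G \<longrightarrow> C \<subseteq> D G"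
      using tower_Inter by blast
    then have "C \<subset> G"
      using tower_comparable_with_extreme[OF deflationary C_extreme G(1)] C(2) deflationary[of C] by blast
    then show "\<Inter>S \<subseteq> D G"
      using C_extreme G(1) C(1) by blast
  qed
qed

lemma tower_comparable:
  assumes "\<And>F. D F \<subseteq> F" "C \<in> tower D" "G \<in> tower D"
  shows "C \<subseteq> G \<or> G \<subseteq> D C"
  using tower_comparable_with_extreme[OF assms(1) tower_extreme[OF assms(1,2)] assms(3)] .

lemma tower_closed:
  assumes "\<And>F. closed F \<Longrightarrow> closed (D F)" "F \<in> tower D"
  shows "closed F"
  using assms(2) by induct (auto simp: assms(1))

lemma fragmentableE:
  assumes "fragmentable f" "\<epsilon> > 0" "closed F" "F \<noteq> {}"
  obtains U where "open U" "U \<inter> F \<noteq> {}" "diam (f ` (U \<inter> F)) < ereal \<epsilon>"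
proof -
  from assms(1)[unfolded fragmentable_def, rule_format, OF assms(2) conjI[OF assms(3,4)]]
  obtain U where "open U" "U \<inter> F \<noteq> {}" "diam (f ` (U \<inter> F)) < ereal \<epsilon>"
    by (elim exE conjE)
  then show thesis
    by (rule that)
qed

text \<open>Fragmentability yields a transfinite derivation: repeatedly remove from a closed set
  the union of the relatively open pieces on which \<open>f\<close> oscillates less than \<open>\<epsilon>\<close>.
  A point \<open>x\<close> is removed at the stage \<open>F\<^sub>x\<close> (the least member of the tower containing it),
  and \<open>V\<^sub>x\<close> is a small piece around \<open>x\<close> that avoids the next stage.\<close>

lemma fragmentable_imp_weakly_separated:
  fixes f :: "'a::topological_space \<Rightarrow> 'b::metric_space"
  assumes "fragmentable f"
  shows "weakly_separated f"
  unfolding weakly_separated_def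
proof (intro allI impI)
  fix \<epsilon> :: real assume "\<epsilon> > 0"
  define D where "D F = F - \<Union>{U. open U \<and> diam (f ` (U \<inter> F)) < ereal \<epsilon>}" for F :: "'a set"
  have deflationary: "D F \<subseteq> F" for F
    unfolding D_def by blast
  have D_closed: "closed (D F)" if "closed F" for F
    unfolding D_def using that by (intro closed_Diff open_Union) auto
  define F\<^sub>x where "F\<^sub>x x = \<Inter>{F \<in> tower D. x \<in> F}" for x
  have F\<^sub>x_tower: "F\<^sub>x x \<in> tower D" for x
    unfolding F\<^sub>x_def by (rule tower_Inter) blast
  have F\<^sub>x_closed: "closed (F\<^sub>x x)" for x
    using D_closed F\<^sub>x_tower by (rule tower_closed)
  have mem_F\<^sub>x: "x \<in> F\<^sub>x x" for x
    unfolding F\<^sub>x_def by blast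
  have removed: "x \<notin> D (F\<^sub>x x)" for x
  proof
    assume "x \<in> D (F\<^sub>x x)"
    moreover have "D (F\<^sub>x x) \<in> tower D"
      using F\<^sub>x_tower by (rule tower_step)
    ultimately have "D (F\<^sub>x x) \<in> {F \<in> tower D. x \<in> F}"
      by blast
    then have "F\<^sub>x x \<subseteq> D (F\<^sub>x x)"
      unfolding F\<^sub>x_def[of x] by (rule Inter_lower)
    moreover obtain U where "open U" "U \<inter> F\<^sub>x x \<noteq> {}" "diam (f ` (U \<inter> F\<^sub>x x)) < ereal \<epsilon>"
      using assms \<open>\<epsilon> > 0\<close> F\<^sub>x_closed by (rule fragmentableE) (use mem_F\<^sub>x in blast)
    ultimately show False
      unfolding D_def by blast
  qed
  then have "\<forall>x. \<exists>U. open U \<and> x \<in> U \<and> diam (f ` (U \<inter> F\<^sub>x x)) < ereal \<epsilon>"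
    using mem_F\<^sub>x unfolding D_def by blast
  then obtain U where U: "\<And>x. open (U x)" "\<And>x. x \<in> U x" "\<And>x. diam (f ` (U x \<inter> F\<^sub>x x)) < ereal \<epsilon>"
    by metis
  define V where "V x = U x - D (F\<^sub>x x)" for x
  have F\<^sub>x_mono: "F\<^sub>x x \<subseteq> F\<^sub>x y" if "y \<in> V x" for x y
  proof -
    have "F\<^sub>x x \<subseteq> F\<^sub>x y \<or> F\<^sub>x y \<subseteq> D (F\<^sub>x x)"
      using deflationary F\<^sub>x_tower F\<^sub>x_tower by (rule tower_comparable)
    then show ?thesis
      using that mem_F\<^sub>x[of y] unfolding V_def by blast
  qed
  show "\<exists>V. (\<forall>x. open (V x) \<and> x \<in> V x) \<and> (\<forall>x y. x \<in> V y \<and> y \<in> V x \<longrightarrow> dist (f x) (f y) < \<epsilon>)"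
  proof (intro exI[of _ V] conjI allI impI)
    fix x
    show "open (V x)" "x \<in> V x"
      unfolding V_def using U removed D_closed F\<^sub>x_closed by auto
  next
    fix x y assume "x \<in> V y \<and> y \<in> V x"
    then have "F\<^sub>x x = F\<^sub>x y"
      using F\<^sub>x_mono by blast
    then have "x \<in> U x \<inter> F\<^sub>x x" "y \<in> U x \<inter> F\<^sub>x x"
      using \<open>x \<in> V y \<and> y \<in> V x\<close> U(2) mem_F\<^sub>x unfolding V_def by auto
    then show "dist (f x) (f y) < \<epsilon>"
      using U(3) by (blast intro: dist_less_of_diam_less)
  qed
qed

lemma weakly_separated_imp_fragmentable:
  fixes f :: "'a::metric_space \<Rightarrow> 'b::metric_space"
  assumes hB: "hereditarily_Baire (euclidean :: 'a topology)" and "weakly_separated f"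
  shows "fragmentable f"
  unfolding fragmentable_def
proof (intro allI impI)
  fix \<epsilon> :: real and F :: "'a set" assume "\<epsilon> > 0" and F: "closed F \<and> F \<noteq> {}"
  then obtain \<delta> where \<delta>_pos: "\<And>x. \<delta> x > 0"
    and \<delta>: "\<And>x y. dist x y < min (\<delta> x) (\<delta> y) \<Longrightarrow> dist (f x) (f y) < \<epsilon> / 4"
    using weakly_separated_imp_LTZ[OF \<open>weakly_separated f\<close>] unfolding LTZ_def
    by (metis divide_pos_pos zero_less_numeral)
  define \<rho> where "\<rho> n = inverse (real (Suc n))" for n
  define X where "X n = {x. \<rho> n < \<delta> x}" for n
  have cover: "F \<subseteq> (\<Union>n. closure (X n \<inter> F))"
  proof
    fix z assume "z \<in> F"
    obtain n where "\<rho> n < \<delta> z"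
      using reals_Archimedean[OF \<delta>_pos] unfolding \<rho>_def by blast
    then have "z \<in> X n \<inter> F"
      using \<open>z \<in> F\<close> unfolding X_def by simp
    then show "z \<in> (\<Union>n. closure (X n \<inter> F))"
      by (intro UN_I[of n] UNIV_I closure_subset[THEN subsetD])
  qed
  obtain n U where U: "open U" "U \<inter> F \<noteq> {}" "U \<inter> F \<subseteq> closure (X n \<inter> F)"
    by (rule hereditarily_Baire_closed_sequence_cover[OF hB _ _ _ cover]) (use F in auto)
  then obtain p where p: "p \<in> U" "p \<in> X n \<inter> F"
    using open_Int_closure_eq_empty[of U "X n \<inter> F"] by blast
  define U' where "U' = U \<inter> ball p (\<rho> n / 2)"
  have "open U'"
    unfolding U'_def using U(1) by blast
  \<comment> \<open>On \<open>U' \<inter> F\<close> the points of \<open>X n\<close> are dense and within \<open>\<rho> n\<close> of each other.\<close>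
  have "U' \<inter> F \<subseteq> closure (U' \<inter> (X n \<inter> F))"
    using open_Int_closure_subset[OF \<open>open U'\<close>, of "X n \<inter> F"] U(3) unfolding U'_def by blast
  then have "diam (f ` (U' \<inter> F)) \<le> diam (f ` closure (U' \<inter> (X n \<inter> F)))"
    by (intro diam_mono image_mono)
  also have "\<dots> \<le> ereal (3 * (\<epsilon> / 4))"
  proof (rule diam_image_closure_le[where \<delta> = \<delta> and r = "\<rho> n", OF \<delta>_pos \<delta>])
    show "\<rho> n < \<delta> y" if "y \<in> U' \<inter> (X n \<inter> F)" for y
      using that unfolding X_def by simp
    show "dist y y' < \<rho> n" if "y \<in> U' \<inter> (X n \<inter> F)" "y' \<in> U' \<inter> (X n \<inter> F)" for y y'
    proof -
      have "dist p y < \<rho> n / 2" "dist p y' < \<rho> n / 2"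
        using that unfolding U'_def by auto
      then show ?thesis
        using dist_triangle3[of y y' p] by linarith
    qed
  qed
  also have "\<dots> < ereal \<epsilon>"
    using \<open>\<epsilon> > 0\<close> by simp
  finally have "diam (f ` (U' \<inter> F)) < ereal \<epsilon>" .
  moreover have "p \<in> U' \<inter> F"
    using p unfolding U'_def \<rho>_def by simp
  ultimately show "\<exists>U. open U \<and> U \<inter> F \<noteq> {} \<and> diam (f ` (U \<inter> F)) < ereal \<epsilon>"
    using \<open>open U'\<close> by blast
qed

lemma fragmentable_small_oscillation_point:
  fixes f :: "'a::topological_space \<Rightarrow> 'b::metric_space"
  assumes hB: "hereditarily_Baire (euclidean :: 'a topology)" and frag: "fragmentable f"
    and "closed F" "F \<noteq> {}"
  obtains x where "x \<in> F" "\<forall>n. \<exists>U. open U \<and> x \<in> U \<and> diam (f ` (U \<inter> F)) < ereal (inverse (real (Suc n)))"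
proof -
  define G where "G n = \<Union>{U. open U \<and> diam (f ` (U \<inter> F)) < ereal (inverse (real (Suc n)))}" for n
  have "open (G n)" for n
    unfolding G_def by auto
  \<comment> \<open>By the Baire property of \<open>F\<close>, no \<open>F - G n\<close> contains a relatively open piece.\<close>
  have "\<exists>x\<in>F. \<forall>n. x \<in> G n"
  proof (rule ccontr)
    assume "\<not> ?thesis"
    then have cover: "F \<subseteq> (\<Union>n. F - G n)"
      by blast
    have "closed (F - G n)" for n
      using \<open>closed F\<close> \<open>open (G n)\<close> by (simp add: closed_Diff)
    obtain n U where U: "open U" "U \<inter> F \<noteq> {}" "U \<inter> F \<subseteq> F - G n"
      by (rule hereditarily_Baire_closed_sequence_cover[OF hB _ _ _ cover])
        (use assms(3,4) \<open>\<And>n. closed (F - G n)\<close> in auto)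
    have closure_piece: "closed (closure (U \<inter> F))" "closure (U \<inter> F) \<noteq> {}"
      using U(2) by auto
    have "inverse (real (Suc n)) > 0"
      by simp
    then obtain U' where U': "open U'" "U' \<inter> closure (U \<inter> F) \<noteq> {}"
      "diam (f ` (U' \<inter> closure (U \<inter> F))) < ereal (inverse (real (Suc n)))"
      using frag closure_piece by (metis fragmentableE)
    then obtain q where "q \<in> U'" "q \<in> U \<inter> F"
      using open_Int_closure_eq_empty[of U' "U \<inter> F"] by blast
    have "diam (f ` ((U' \<inter> U) \<inter> F)) \<le> diam (f ` (U' \<inter> closure (U \<inter> F)))"
      using closure_subset[of "U \<inter> F"] by (intro diam_mono image_mono) blast
    then have "U' \<inter> U \<subseteq> G n"
      unfolding G_def using U'(1,3) U(1) by (intro Union_upper) auto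
    then show False
      using \<open>q \<in> U'\<close> \<open>q \<in> U \<inter> F\<close> U(3) by blast
  qed
  then show thesis
    using that unfolding G_def by blast
qed

lemma fragmentable_imp_PCP:
  fixes f :: "'a::topological_space \<Rightarrow> 'b::metric_space"
  assumes hB: "hereditarily_Baire (euclidean :: 'a topology)" and frag: "fragmentable f"
  shows "PCP f"
  unfolding PCP_def
proof (intro allI impI)
  fix F :: "'a set" assume "closed F \<and> F \<noteq> {}"
  then obtain x where x: "x \<in> F"
    "\<forall>n. \<exists>U. open U \<and> x \<in> U \<and> diam (f ` (U \<inter> F)) < ereal (inverse (real (Suc n)))"
    by (elim conjE fragmentable_small_oscillation_point[OF hB frag])
  have "\<forall>\<^sub>F y in at x within F. dist (f y) (f x) < e" if "e > 0" for e
  proof -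
    obtain n where "inverse (real (Suc n)) < e"
      using reals_Archimedean[OF \<open>e > 0\<close>] by blast
    moreover obtain U where "open U" "x \<in> U" "diam (f ` (U \<inter> F)) < ereal (inverse (real (Suc n)))"
      using x(2) by blast
    ultimately have "dist (f y) (f x) < e" if "y \<in> U" "y \<in> F" for y
      using dist_less_of_diam_less[of "f ` (U \<inter> F)"] that x(1) by fastforce
    then show ?thesis
      unfolding eventually_at_topological using \<open>open U\<close> \<open>x \<in> U\<close> by blast
  qed
  then show "\<exists>x\<in>F. (f \<longlongrightarrow> f x) (at x within F)"
    using x(1) by (auto simp: tendsto_iff)
qed

section \<open>Borel 1 functions on hereditarily Baire spaces\<close>

lemma Borel1_preimage_closed_cover:
  assumes "Borel1 f" "open W"
  obtains \<C> where "countable \<C>" "\<And>C. C \<in> \<C> \<Longrightarrow> closed C" "f -` W = \<Union>\<C>"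
proof -
  have "fsigma_in euclidean (f -` W)"
    using assms by (simp add: Borel1_def)
  then obtain \<C> where "countable \<C>" "\<C> \<subseteq> Collect (closedin euclidean)" "\<Union>\<C> = f -` W"
    unfolding fsigma_in_def union_of_def by (elim exE conjE)
  moreover from this have "closed C" if "C \<in> \<C>" for C
    using that unfolding closed_closedin by blast
  ultimately show thesis
    using that by simp
qed

lemma Borel1_countable_open_cover_piece:
  fixes f :: "'a::topological_space \<Rightarrow> 'b::metric_space"
  assumes hB: "hereditarily_Baire (euclidean :: 'a topology)" and "Borel1 f"
    and "closed F" "open V" "V \<inter> F \<noteq> {}"
    and "countable \<W>" "\<And>W. W \<in> \<W> \<Longrightarrow> open W" "f ` (V \<inter> F) \<subseteq> \<Union>\<W>"
  obtains W U where "W \<in> \<W>" "open U" "U \<inter> F \<noteq> {}" "U \<inter> F \<subseteq> V \<inter> f -` W"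
proof -
  have "\<exists>\<C>. countable \<C> \<and> (\<forall>C\<in>\<C>. closed C) \<and> f -` W = \<Union>\<C>" if "W \<in> \<W>" for W
    by (rule Borel1_preimage_closed_cover[OF \<open>Borel1 f\<close> assms(7)[OF that]]) blast
  then obtain \<C> where \<C>: "\<And>W. W \<in> \<W> \<Longrightarrow> countable (\<C> W)"
    "\<And>W C. W \<in> \<W> \<Longrightarrow> C \<in> \<C> W \<Longrightarrow> closed C" "\<And>W. W \<in> \<W> \<Longrightarrow> f -` W = \<Union>(\<C> W)"
    by metis
  have cover: "V \<inter> F \<subseteq> \<Union>(\<Union>W\<in>\<W>. \<C> W)"
  proof
    fix z assume "z \<in> V \<inter> F"
    then obtain W where "W \<in> \<W>" "z \<in> f -` W"
      using assms(8) by blast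
    then show "z \<in> \<Union>(\<Union>W\<in>\<W>. \<C> W)"
      using \<C>(3) by blast
  qed
  obtain C U where "C \<in> (\<Union>W\<in>\<W>. \<C> W)" "open U" "U \<inter> F \<noteq> {}" "U \<inter> F \<subseteq> C \<inter> V"
    by (rule hereditarily_Baire_countable_closed_cover[OF hB assms(3-5) _ _ cover])
      (use \<C>(1,2) \<open>countable \<W>\<close> in auto)
  moreover from this obtain W where "W \<in> \<W>" "C \<subseteq> f -` W"
    using \<C>(3) by blast
  ultimately show thesis
    using that by blast
qed

lemma Borel1_dense_subsets_share_open:
  fixes f :: "'a::topological_space \<Rightarrow> 'b::metric_space" and W :: "'i \<Rightarrow> 'b set"
  assumes hB: "hereditarily_Baire (euclidean :: 'a topology)" and "Borel1 f"
    and "closed K" "P \<subseteq> K" "Q \<subseteq> K" "K \<subseteq> closure P" "K \<subseteq> closure Q" "P \<noteq> {}"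
    and "\<And>i. open (W i)" "f ` K \<subseteq> (\<Union>i. W i)"
  shows "\<exists>i. f ` P \<inter> W i \<noteq> {} \<and> f ` Q \<inter> W i \<noteq> {}"
proof (rule ccontr)
  assume no_common: "\<not> ?thesis"
  define S where "S = {i. f ` P \<inter> W i \<noteq> {}}"
  \<comment> \<open>Baire on \<open>K\<close> for the two open sets hit by \<open>P\<close> and missed by \<open>P\<close>; both \<open>P\<close> and \<open>Q\<close>
    are dense, so the resulting piece contains points of each.\<close>
  have cover: "f ` (UNIV \<inter> K) \<subseteq> \<Union>{\<Union>(W ` S), \<Union>(W ` (- S))}"
  proof
    fix y assume "y \<in> f ` (UNIV \<inter> K)"
    then obtain i where "y \<in> W i"
      using assms(10) by blast
    then show "y \<in> \<Union>{\<Union>(W ` S), \<Union>(W ` (- S))}"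
      by (cases "i \<in> S") auto
  qed
  obtain Z U where Z: "Z \<in> {\<Union>(W ` S), \<Union>(W ` (- S))}"
    and U: "open U" "U \<inter> K \<noteq> {}" "U \<inter> K \<subseteq> UNIV \<inter> f -` Z"
  proof (rule Borel1_countable_open_cover_piece[OF hB \<open>Borel1 f\<close> \<open>closed K\<close> open_UNIV _ _ _ cover])
    show "UNIV \<inter> K \<noteq> {}"
      using assms(4,8) by blast
    show "countable {\<Union>(W ` S), \<Union>(W ` (- S))}"
      by simp
    show "open Z" if "Z \<in> {\<Union>(W ` S), \<Union>(W ` (- S))}" for Z
      using that assms(9) by auto
  qed (rule that)
  have "U \<inter> closure P \<noteq> {}" "U \<inter> closure Q \<noteq> {}"
    using U(2) assms(6,7) by blast+
  then have "U \<inter> P \<noteq> {}" "U \<inter> Q \<noteq> {}"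
    using open_Int_closure_eq_empty[OF U(1)] by simp_all
  then obtain p q where "p \<in> U \<inter> P" "q \<in> U \<inter> Q"
    by blast
  then have "f p \<in> Z" "f q \<in> Z"
    using U(3) assms(4,5) by blast+
  with Z show False
  proof (elim insertE emptyE)
    assume "Z = \<Union>(W ` S)"
    then obtain i where "i \<in> S" "f q \<in> W i"
      using \<open>f q \<in> Z\<close> by blast
    then show False
      using no_common \<open>q \<in> U \<inter> Q\<close> unfolding S_def by blast
  next
    assume "Z = \<Union>(W ` (- S))"
    then obtain i where "i \<notin> S" "f p \<in> W i"
      using \<open>f p \<in> Z\<close> by blast
    then show False
      using \<open>p \<in> U \<inter> P\<close> unfolding S_def by blast
  qed
qed

text \<open>Step \<open>n > 0\<close> of the sequence constructed below serves the task \<open>(k, j)\<close>: approximate the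
  earlier term \<open>x k\<close> to within \<open>1 / (j + 1)\<close>. Every task is served by an odd and by an even step.\<close>

definition sequence_task :: "nat \<Rightarrow> nat \<times> nat" where
  "sequence_task n = prod_decode ((n - 1) div 2)"

lemma sequence_task_less: "0 < n \<Longrightarrow> fst (sequence_task n) < n"
proof -
  assume "0 < n"
  have "fst (sequence_task n) \<le> (n - 1) div 2"
    unfolding sequence_task_def by (metis le_prod_encode_1 prod.collapse prod_decode_inverse)
  then show ?thesis
    using \<open>0 < n\<close> by linarith
qed

lemma sequence_task_odd_even:
  "sequence_task (Suc (2 * m)) = prod_decode m" "sequence_task (Suc (Suc (2 * m))) = prod_decode m"
  unfolding sequence_task_def by simp_all

lemma fresh_label_sequence:
  fixes H :: "'a::metric_space set" and label :: "'a \<Rightarrow> 'c"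
  assumes "H \<noteq> {}"
    and fresh: "\<And>p \<rho> T. p \<in> H \<Longrightarrow> \<rho> > 0 \<Longrightarrow> finite T \<Longrightarrow> \<exists>q\<in>H. dist p q < \<rho> \<and> label q \<notin> T"
  obtains x :: "nat \<Rightarrow> 'a" where "range x \<subseteq> H"
    "\<forall>n>0. dist (x (fst (sequence_task n))) (x n) < inverse (real (Suc (snd (sequence_task n))))"
    "\<forall>m n. m < n \<longrightarrow> label (x m) \<noteq> label (x n)"
proof -
  define step where "step x n q \<longleftrightarrow> q \<in> H \<and> (0 < n \<longrightarrow>
      dist (x (fst (sequence_task n))) q < inverse (real (Suc (snd (sequence_task n)))) \<and>
      label q \<notin> label ` x ` {..<n})"
    for x :: "nat \<Rightarrow> 'a" and n q
  have "\<exists>x. \<forall>n. step x n (x n)"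
  proof (rule dependent_wellorder_choice)
    fix x y :: "nat \<Rightarrow> 'a" and n q
    assume "\<And>m. m < n \<Longrightarrow> x m = y m"
    then have "0 < n \<longrightarrow> x (fst (sequence_task n)) = y (fst (sequence_task n))"
      "label ` x ` {..<n} = label ` y ` {..<n}"
      using sequence_task_less by auto
    then show "step x n q = step y n q"
      unfolding step_def by simp
  next
    fix x :: "nat \<Rightarrow> 'a" and n
    assume earlier: "\<And>m. m < n \<Longrightarrow> step x m (x m)"
    show "\<exists>q. step x n q"
    proof (cases "n = 0")
      case True
      then show ?thesis
        using \<open>H \<noteq> {}\<close> unfolding step_def by auto
    next
      case False
      then have "x (fst (sequence_task n)) \<in> H"
        using earlier[of "fst (sequence_task n)"] sequence_task_less unfolding step_def by simp
      then show ?thesis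
        using fresh[of "x (fst (sequence_task n))" "inverse (real (Suc (snd (sequence_task n))))"
            "label ` x ` {..<n}"]
        unfolding step_def by auto
    qed
  qed
  then obtain x where x: "\<And>n. step x n (x n)"
    by blast
  have "label (x m) \<noteq> label (x n)" if "m < n" for m n
  proof -
    have "label (x m) \<in> label ` x ` {..<n}"
      using that by simp
    moreover have "label (x n) \<notin> label ` x ` {..<n}"
      using x[of n] that unfolding step_def by simp
    ultimately show ?thesis
      by auto
  qed
  moreover have "range x \<subseteq> H"
    using x unfolding step_def by auto
  ultimately show thesis
    using that x unfolding step_def by blast
qed

lemma sequence_with_fresh_labels:
  fixes H :: "'a::metric_space set" and label :: "'a \<Rightarrow> 'c"
  assumes "H \<noteq> {}"
    and fresh: "\<And>p \<rho> T. p \<in> H \<Longrightarrow> \<rho> > 0 \<Longrightarrow> finite T \<Longrightarrow> \<exists>q\<in>H. dist p q < \<rho> \<and> label q \<notin> T"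
  obtains x :: "nat \<Rightarrow> 'a" where "range x \<subseteq> H" "inj (label \<circ> x)"
    "range x \<subseteq> closure (x ` {n. odd n})" "range x \<subseteq> closure (x ` {n. even n})"
proof -
  obtain x :: "nat \<Rightarrow> 'a" where "range x \<subseteq> H"
    and close: "\<forall>n>0. dist (x (fst (sequence_task n))) (x n) < inverse (real (Suc (snd (sequence_task n))))"
    and distinct: "\<forall>m n. m < n \<longrightarrow> label (x m) \<noteq> label (x n)"
    using assms by (rule fresh_label_sequence)
  have "inj (label \<circ> x)"
    using distinct by (intro linorder_injI) simp
  moreover have "x k \<in> closure (x ` {n. odd n}) \<and> x k \<in> closure (x ` {n. even n})" for k
  proof -
    have "(\<exists>y\<in>x ` {n. odd n}. dist y (x k) < \<epsilon>) \<and> (\<exists>y\<in>x ` {n. even n}. dist y (x k) < \<epsilon>)"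
      if "\<epsilon> > 0" for \<epsilon>
    proof -
      obtain j where j: "inverse (real (Suc j)) < \<epsilon>"
        using reals_Archimedean[OF \<open>\<epsilon> > 0\<close>] by blast
      define m where "m = prod_encode (k, j)"
      have "dist (x (Suc (2 * m))) (x k) < \<epsilon>" "dist (x (Suc (Suc (2 * m)))) (x k) < \<epsilon>"
        using close[rule_format, of "Suc (2 * m)"] close[rule_format, of "Suc (Suc (2 * m))"] j
        unfolding sequence_task_odd_even m_def by (auto simp: dist_commute)
      moreover have "x (Suc (2 * m)) \<in> x ` {n. odd n}" "x (Suc (Suc (2 * m))) \<in> x ` {n. even n}"
        by simp_all
      ultimately show ?thesis
        by blast
    qed
    then show ?thesis
      unfolding closure_approachable by blast
  qed
  ultimately show thesis
    using that \<open>range x \<subseteq> H\<close> by blast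
qed

lemma Borel1_avoid_finitely_many:
  fixes f :: "'a::topological_space \<Rightarrow> 'b::metric_space" and W :: "'i \<Rightarrow> 'b set"
  assumes hB: "hereditarily_Baire (euclidean :: 'a topology)" and "Borel1 f"
    and "closed F" "open V" "V \<inter> F \<noteq> {}" "\<And>i. open (W i)" "f ` (V \<inter> F) \<subseteq> (\<Union>i. W i)" "finite T"
    and no_piece: "\<And>U i. open U \<Longrightarrow> U \<inter> F \<noteq> {} \<Longrightarrow> U \<inter> F \<subseteq> V \<inter> f -` W i \<Longrightarrow> i \<notin> T"
  obtains q j where "q \<in> V \<inter> F" "j \<notin> T" "f q \<in> W j"
proof -
  have cover: "f ` (V \<inter> F) \<subseteq> \<Union>(insert (\<Union>i\<in>-T. W i) (W ` T))"
  proof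
    fix y assume "y \<in> f ` (V \<inter> F)"
    then obtain i where "y \<in> W i"
      using assms(7) by blast
    then show "y \<in> \<Union>(insert (\<Union>i\<in>-T. W i) (W ` T))"
      by (cases "i \<in> T") auto
  qed
  obtain Z U where "Z \<in> insert (\<Union>i\<in>-T. W i) (W ` T)" "open U" "U \<inter> F \<noteq> {}" "U \<inter> F \<subseteq> V \<inter> f -` Z"
  proof (rule Borel1_countable_open_cover_piece[OF hB \<open>Borel1 f\<close> assms(3-5) _ _ cover])
    show "countable (insert (\<Union>i\<in>-T. W i) (W ` T))"
      using \<open>finite T\<close> by (simp add: countable_finite)
    show "open Z" if "Z \<in> insert (\<Union>i\<in>-T. W i) (W ` T)" for Z
      using that assms(6) by auto
  qed (rule that)
  moreover have "Z \<notin> W ` T"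
  proof
    assume "Z \<in> W ` T"
    then obtain i where "i \<in> T" "Z = W i"
      by blast
    then show False
      using no_piece \<open>open U\<close> \<open>U \<inter> F \<noteq> {}\<close> \<open>U \<inter> F \<subseteq> V \<inter> f -` Z\<close> by blast
  qed
  ultimately have "Z = (\<Union>i\<in>-T. W i)"
    by blast
  moreover obtain q where "q \<in> U \<inter> F"
    using \<open>U \<inter> F \<noteq> {}\<close> by blast
  ultimately have "q \<in> V \<inter> F" "f q \<in> (\<Union>i\<in>-T. W i)"
    using \<open>U \<inter> F \<subseteq> V \<inter> f -` Z\<close> by auto
  then show thesis
    using that by blast
qed

lemma disjoint_family_labelling:
  fixes W :: "'i \<Rightarrow> 'b set"
  assumes "disjoint_family W" "f ` S \<subseteq> (\<Union>i. W i)"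
  obtains label where "\<And>p. p \<in> S \<Longrightarrow> f p \<in> W (label p)"
    "\<And>p i. p \<in> S \<Longrightarrow> f p \<in> W i \<Longrightarrow> label p = i"
proof -
  define label where "label p = (SOME i. f p \<in> W i)" for p
  have label: "f p \<in> W (label p)" if "p \<in> S" for p
  proof -
    have "f p \<in> (\<Union>i. W i)"
      using assms(2) that by (rule subsetD[OF _ imageI])
    then have "\<exists>i. f p \<in> W i"
      by simp
    then show ?thesis
      unfolding label_def by (rule someI_ex)
  qed
  have label_eq: "label p = i" if "p \<in> S" "f p \<in> W i" for p i
  proof (rule ccontr)
    assume "label p \<noteq> i"
    then have "W (label p) \<inter> W i = {}"
      using \<open>disjoint_family W\<close> by (simp add: disjoint_family_onD)
    then show False
      using label[OF that(1)] that(2) by (simp add: disjoint_iff)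
  qed
  show thesis
    using label label_eq by (rule that)
qed

lemma Borel1_odd_even_terms_share_open:
  fixes f :: "'a::topological_space \<Rightarrow> 'b::metric_space" and x :: "nat \<Rightarrow> 'a" and W :: "'i \<Rightarrow> 'b set"
  assumes hB: "hereditarily_Baire (euclidean :: 'a topology)" and "Borel1 f"
    and "\<And>i. open (W i)" "f ` closure (range x) \<subseteq> (\<Union>i. W i)"
    and "range x \<subseteq> closure (x ` {n. odd n})" "range x \<subseteq> closure (x ` {n. even n})"
  obtains m n i where "odd m" "even n" "f (x m) \<in> W i" "f (x n) \<in> W i"
proof -
  let ?K = "closure (range x)"
  have "?K \<subseteq> closure (x ` {n. odd n})" "?K \<subseteq> closure (x ` {n. even n})"
    using assms(5,6) by (simp_all add: closure_minimal)
  moreover have "x ` {n. odd n} \<subseteq> ?K" "x ` {n. even n} \<subseteq> ?K"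
    using closure_subset[of "range x"] by auto
  moreover have "x ` {n. odd n} \<noteq> {}"
    using odd_one by blast
  ultimately obtain i where "f ` x ` {n. odd n} \<inter> W i \<noteq> {}" "f ` x ` {n. even n} \<inter> W i \<noteq> {}"
    using Borel1_dense_subsets_share_open[OF hB \<open>Borel1 f\<close> closed_closure] assms(3,4) by metis
  then show thesis
    using that by blast
qed

text \<open>Suppose \<open>f\<close> maps a piece of \<open>F\<close> into a disjoint union of open sets
  \<open>W i\<close> but no smaller piece into a single \<open>W i\<close>. Labelling points by the index of the \<open>W i\<close>
  containing their image, one builds a sequence with distinct labels whose odd and whose even
  terms are both dense in its closure; Baire on that closure then forces an odd and an even
  term to share a label.\<close>

lemma Borel1_disjoint_open_cover_piece:
  fixes f :: "'a::metric_space \<Rightarrow> 'b::metric_space" and W :: "'i \<Rightarrow> 'b set"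
  assumes hB: "hereditarily_Baire (euclidean :: 'a topology)" and "Borel1 f"
    and "closed F" "open U" "U \<inter> F \<noteq> {}"
    and "\<And>i. open (W i)" "disjoint_family W" "f ` (U \<inter> F) \<subseteq> (\<Union>i. W i)"
  obtains V i where "open V" "V \<inter> F \<noteq> {}" "V \<inter> F \<subseteq> U \<inter> f -` W i"
proof (rule ccontr)
  assume "\<not> thesis"
  note piece = that
  have no_piece: "\<not> V \<inter> F \<subseteq> U \<inter> f -` W i" if "open V" "V \<inter> F \<noteq> {}" for V i
    using \<open>\<not> thesis\<close> piece[OF that] by (rule contrapos_nn)
  obtain label where label: "\<And>p. p \<in> U \<inter> F \<Longrightarrow> f p \<in> W (label p)"
    and label_eq: "\<And>p i. p \<in> U \<inter> F \<Longrightarrow> f p \<in> W i \<Longrightarrow> label p = i"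
    using disjoint_family_labelling[OF assms(7,8)] by blast
  obtain x0 where "x0 \<in> U \<inter> F"
    using \<open>U \<inter> F \<noteq> {}\<close> by blast
  then obtain r where "r > 0" "cball x0 r \<subseteq> U"
    using \<open>open U\<close> open_contains_cball by (meson IntD1)
  define H where "H = ball x0 r \<inter> F"
  have "closure H \<subseteq> cball x0 r \<inter> F"
    unfolding H_def using \<open>closed F\<close> ball_subset_cball[of x0 r] by (intro closure_minimal) auto
  then have H_closure: "closure H \<subseteq> U \<inter> F"
    using \<open>cball x0 r \<subseteq> U\<close> by blast
  have fresh: "\<exists>q\<in>H. dist p q < \<rho> \<and> label q \<notin> T" if "p \<in> H" "\<rho> > 0" "finite T" for p \<rho> T
  proof -
    define V where "V = ball x0 r \<inter> ball p \<rho>"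
    have "V \<subseteq> U"
      unfolding V_def using \<open>cball x0 r \<subseteq> U\<close> ball_subset_cball by blast
    have "p \<in> V \<inter> F"
      using that unfolding V_def H_def by simp
    obtain q j where "q \<in> V \<inter> F" "j \<notin> T" "f q \<in> W j"
    proof (rule Borel1_avoid_finitely_many[OF hB \<open>Borel1 f\<close> \<open>closed F\<close> _ _ assms(6) _ \<open>finite T\<close>])
      show "open V"
        unfolding V_def by auto
      show "V \<inter> F \<noteq> {}"
        using \<open>p \<in> V \<inter> F\<close> by blast
      show "f ` (V \<inter> F) \<subseteq> (\<Union>i. W i)"
        using assms(8) \<open>V \<subseteq> U\<close> by (meson Int_mono image_mono order.trans order_refl)
      show "i \<notin> T" if "open U'" "U' \<inter> F \<noteq> {}" "U' \<inter> F \<subseteq> V \<inter> f -` W i" for U' i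
        using no_piece[OF that(1,2)] that(3) \<open>V \<subseteq> U\<close> by blast
    qed (rule that)
    moreover from this have "label q = j"
      using \<open>V \<subseteq> U\<close> label_eq by blast
    ultimately show ?thesis
      unfolding V_def H_def by auto
  qed
  have "x0 \<in> H"
    unfolding H_def using \<open>x0 \<in> U \<inter> F\<close> \<open>r > 0\<close> by simp
  then have "H \<noteq> {}"
    by blast
  then obtain x :: "nat \<Rightarrow> 'a" where x: "range x \<subseteq> H" "inj (label \<circ> x)"
    "range x \<subseteq> closure (x ` {n. odd n})" "range x \<subseteq> closure (x ` {n. even n})"
    using fresh by (rule sequence_with_fresh_labels)
  have "closure (range x) \<subseteq> U \<inter> F"
    using closure_mono[OF x(1)] H_closure by blast
  then have "f ` closure (range x) \<subseteq> f ` (U \<inter> F)"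
    by (rule image_mono)
  then have "f ` closure (range x) \<subseteq> (\<Union>i. W i)"
    using assms(8) by (rule order.trans)
  then obtain m n i where "odd m" "even n" "f (x m) \<in> W i" "f (x n) \<in> W i"
    by (rule Borel1_odd_even_terms_share_open[OF hB \<open>Borel1 f\<close> assms(6) _ x(3,4)])
  moreover have "x m \<in> U \<inter> F" "x n \<in> U \<inter> F"
    using x(1) H_closure closure_subset[of H] by auto
  ultimately have "label (x m) = label (x n)"
    using label_eq by metis
  then have "m = n"
    using x(2) by (metis comp_apply injD)
  then show False
    using \<open>odd m\<close> \<open>even n\<close> by simp
qed

lemma Borel1_imp_fragmentable:
  fixes f :: "'a::metric_space \<Rightarrow> 'b::metric_space"
  assumes hB: "hereditarily_Baire (euclidean :: 'a topology)" and "Borel1 f"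
  shows "fragmentable f"
  unfolding fragmentable_def
proof (intro allI impI)
  fix \<epsilon> :: real and F :: "'a set" assume "\<epsilon> > 0" and F: "closed F \<and> F \<noteq> {}"
  then have "\<epsilon> / 3 > 0"
    by simp
  then obtain Q :: "nat \<Rightarrow> 'b \<Rightarrow> 'b set" where Q_open: "\<And>m a. open (Q m a)"
    and Q_ball: "\<And>m a. Q m a \<subseteq> ball a (\<epsilon> / 3)" and Q_cover: "\<And>y. \<exists>m a. y \<in> Q m a"
    and Q_separated: "\<And>m a b y z. a \<noteq> b \<Longrightarrow> y \<in> Q m a \<Longrightarrow> z \<in> Q m b \<Longrightarrow> inverse (real (Suc m)) \<le> dist y z"
    by (rule ball_cover_sigma_discrete_refinement) blast
  have cover: "f ` (UNIV \<inter> F) \<subseteq> \<Union>(range (\<lambda>m. \<Union>a. Q m a))"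
    using Q_cover by blast
  obtain Z U where "Z \<in> range (\<lambda>m. \<Union>a. Q m a)" "open U" "U \<inter> F \<noteq> {}" "U \<inter> F \<subseteq> UNIV \<inter> f -` Z"
    by (rule Borel1_countable_open_cover_piece[OF hB \<open>Borel1 f\<close> _ open_UNIV _ _ _ cover])
      (use F Q_open in auto)
  then obtain m where U: "open U" "U \<inter> F \<noteq> {}" "f ` (U \<inter> F) \<subseteq> (\<Union>a. Q m a)"
    by blast
  have "disjoint_family (Q m)"
    unfolding disjoint_family_on_def
  proof (intro ballI impI)
    fix a b :: 'b assume "a \<noteq> b"
    have "y \<notin> Q m b" if "y \<in> Q m a" for y
      using Q_separated[OF \<open>a \<noteq> b\<close> that, of y] by auto
    then show "Q m a \<inter> Q m b = {}"
      by blast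
  qed
  obtain V a where V: "open V" "V \<inter> F \<noteq> {}" "V \<inter> F \<subseteq> U \<inter> f -` Q m a"
  proof (rule Borel1_disjoint_open_cover_piece[OF hB \<open>Borel1 f\<close> _ U(1,2) Q_open \<open>disjoint_family (Q m)\<close> U(3)])
    show "closed F"
      using F by blast
  qed (rule that)
  then have "diam (f ` (V \<inter> F)) \<le> ereal (2 * (\<epsilon> / 3))"
    using Q_ball[of m a] by (intro diam_subset_ball) blast
  also have "\<dots> < ereal \<epsilon>"
    using \<open>\<epsilon> > 0\<close> by simp
  finally show "\<exists>U. open U \<and> U \<inter> F \<noteq> {} \<and> diam (f ` (U \<inter> F)) < ereal \<epsilon>"
    using V(1,2) by blast
qed

theorem theorem2p4:
  fixes f :: "'a::metric_space \<Rightarrow> 'b::metric_space"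
  shows "(weakly_separated f \<longleftrightarrow> LTZ f)
    \<and> (weakly_separated f \<longrightarrow> generalized_Lebesgue_property f)
    \<and> (fragmentable f \<longrightarrow> Borel1 f)
    \<and> (hereditarily_Baire (euclidean :: 'a topology) \<and> Borel1 f \<longrightarrow> PCP f)
    \<and> (hereditarily_Baire (euclidean :: 'a topology) \<and> weakly_separated f \<longrightarrow> fragmentable f)
    \<and> (separable_space (euclidean :: 'a topology) \<and> generalized_Lebesgue_property f
         \<longrightarrow> Lebesgue_property f)"
proof (intro conjI impI)
  show "weakly_separated f \<longleftrightarrow> LTZ f"
    using weakly_separated_imp_LTZ LTZ_imp_weakly_separated by blast
next
  assume "weakly_separated f"
  then show "generalized_Lebesgue_property f"
    by (intro LTZ_imp_generalized_Lebesgue_property weakly_separated_imp_LTZ)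
next
  assume "fragmentable f"
  then show "Borel1 f"
    by (intro generalized_Lebesgue_property_imp_Borel1 LTZ_imp_generalized_Lebesgue_property
        weakly_separated_imp_LTZ fragmentable_imp_weakly_separated)
next
  assume "hereditarily_Baire (euclidean :: 'a topology) \<and> Borel1 f"
  then show "PCP f"
    using fragmentable_imp_PCP Borel1_imp_fragmentable by blast
next
  assume "hereditarily_Baire (euclidean :: 'a topology) \<and> weakly_separated f"
  then show "fragmentable f"
    using weakly_separated_imp_fragmentable by blast
next
  assume "separable_space (euclidean :: 'a topology) \<and> generalized_Lebesgue_property f"
  then show "Lebesgue_property f"
    using generalized_Lebesgue_property_imp_Lebesgue_property by blast
qed

end
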